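(* Let $G=(V,E)$ be a directed acyclic graph with real edge weights, let $s_1,t_1,s_2,t_2\in V$, let $E_\cap=E(s_1,t_1)\cap E(s_2,t_2)$, and let $\mathcal{B}$ be the set of vertex sets of the connected components of the undirected graph on vertex set $V$ obtained from $(V,E_\cap)$ by ignoring edge directions. If $(P_1,P_2)\in\Pi(s_1,t_1)\times\Pi(s_2,t_2)$ is a pair of paths with $V(P_1)\cap V(P_2)\neq\emptyset$, then there is $B\in\mathcal{B}$ with $V(P_1)\cap V(P_2)\subseteq B$.
   Context: $\Pi(x,y)$ is the set of shortest (minimum weight) paths from $x$ to $y$; $E(x,y)$ is the set of edges lying on at least one path in $\Pi(x,y)$; $V(P)$ is the vertex set of path $P$. *)

theory Defs
  imports Complex_Main
begin

definition dag :: "'a set \<Rightarrow> ('a \<times> 'a) set \<Rightarrow> bool" where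
  "dag V E \<longleftrightarrow> finite V \<and> E \<subseteq> V \<times> V \<and> (\<forall>v. (v, v) \<notin> E\<^sup>+)"

definition is_path :: "('a \<times> 'a) set \<Rightarrow> 'a list \<Rightarrow> 'a \<Rightarrow> 'a \<Rightarrow> bool" where
  "is_path E p x y \<longleftrightarrow> p \<noteq> [] \<and> hd p = x \<and> last p = y \<and>
     (\<forall>i. Suc i < length p \<longrightarrow> (p ! i, p ! Suc i) \<in> E)"

definition path_edges :: "'a list \<Rightarrow> ('a \<times> 'a) set" where
  "path_edges p = set (zip p (tl p))"

definition path_weight :: "('a \<times> 'a \<Rightarrow> real) \<Rightarrow> 'a list \<Rightarrow> real" where
  "path_weight w p = (\<Sum>e\<leftarrow>zip p (tl p). w e)"

definition shortest_paths ::
  "('a \<times> 'a) set \<Rightarrow> ('a \<times> 'a \<Rightarrow> real) \<Rightarrow> 'a \<Rightarrow> 'a \<Rightarrow> 'a list set" where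
  "shortest_paths E w x y =
     {p. is_path E p x y \<and> (\<forall>q. is_path E q x y \<longrightarrow> path_weight w p \<le> path_weight w q)}"

definition sp_edges ::
  "('a \<times> 'a) set \<Rightarrow> ('a \<times> 'a \<Rightarrow> real) \<Rightarrow> 'a \<Rightarrow> 'a \<Rightarrow> ('a \<times> 'a) set" where
  "sp_edges E w x y = (\<Union>p\<in>shortest_paths E w x y. path_edges p)"

definition undirected_components :: "'a set \<Rightarrow> ('a \<times> 'a) set \<Rightarrow> 'a set set" where
  "undirected_components V F = V // (((F \<union> F\<inverse>)\<^sup>*) \<inter> (V \<times> V))"

end

theory Submission imports Defs begin

(* In a DAG, two vertices x, y common to P1 and P2 occur in the same order on both
   paths, since otherwise the two paths would close a cycle.  Both subpaths from x to y
   are then shortest x-y paths by the exchange argument, so they have equal weight, and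
   splicing the subpath of P2 into P1 yields another shortest s1-t1 path.  Hence every
   edge of P2 between x and y lies in E(s1,t1) \<inter> E(s2,t2), which connects x and y. *)

definition join_path :: "'a list \<Rightarrow> 'a list \<Rightarrow> 'a list" where
  "join_path xs ys = xs @ tl ys"

definition subpath :: "'a list \<Rightarrow> nat \<Rightarrow> nat \<Rightarrow> 'a list" where
  "subpath p i j = drop i (take (Suc j) p)"

lemma path_edges_conv_nth: "path_edges p = {(p ! i, p ! Suc i) | i. Suc i < length p}"
  unfolding path_edges_def by (force simp: in_set_zip nth_tl)

lemma is_path_iff_path_edges:
  "is_path E p a b \<longleftrightarrow> p \<noteq> [] \<and> hd p = a \<and> last p = b \<and> path_edges p \<subseteq> E"
  unfolding is_path_def path_edges_conv_nth by auto

lemma is_path_mono: "is_path E p a b \<Longrightarrow> path_edges p \<subseteq> F \<Longrightarrow> is_path F p a b"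
  by (simp add: is_path_iff_path_edges)

lemma is_path_nth_trancl:
  assumes "is_path E p a b" "i < j" "j < length p"
  shows "(p ! i, p ! j) \<in> E\<^sup>+"
  using assms(2,3)
proof (induction j)
  case (Suc j)
  have "(p ! j, p ! Suc j) \<in> E" using assms(1) Suc.prems(2) by (simp add: is_path_def)
  then show ?case using Suc by (cases "i = j") auto
qed simp

lemma is_path_nth_rtrancl:
  "is_path E p a b \<Longrightarrow> i \<le> j \<Longrightarrow> j < length p \<Longrightarrow> (p ! i, p ! j) \<in> E\<^sup>*"
  using is_path_nth_trancl[of E p a b i j] by (cases "i = j") auto

lemma is_path_rtrancl:
  assumes "is_path E p a b"
  shows "(a, b) \<in> E\<^sup>*"
proof -
  have "p \<noteq> []" "a = p ! 0" "b = p ! (length p - 1)"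
    using assms by (auto simp: is_path_def hd_conv_nth last_conv_nth)
  then show ?thesis using is_path_nth_rtrancl[OF assms, of 0 "length p - 1"] by simp
qed

lemma set_path_subset:
  assumes "E \<subseteq> V \<times> V" "a \<in> V" "is_path E p a b"
  shows "set p \<subseteq> V"
proof
  fix x assume "x \<in> set p"
  then obtain n where "n < length p" "x = p ! n" by (auto simp: in_set_conv_nth)
  moreover have "p ! 0 = a" using assms(3) by (auto simp: is_path_def hd_conv_nth)
  ultimately have "(a, x) \<in> E\<^sup>*" using is_path_nth_rtrancl[OF assms(3), of 0 n] by simp
  then show "x \<in> V" using assms(1,2) by (induction rule: rtrancl_induct) auto
qed

lemma zip_tl_join_path:
  "xs \<noteq> [] \<Longrightarrow> last xs = hd ys \<Longrightarrow>
   zip (join_path xs ys) (tl (join_path xs ys)) = zip xs (tl xs) @ zip ys (tl ys)"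
proof (induction xs)
  case (Cons x xs)
  then show ?case by (cases xs; cases ys) (auto simp: join_path_def)
qed simp

lemma path_edges_join_path:
  "xs \<noteq> [] \<Longrightarrow> last xs = hd ys \<Longrightarrow>
   path_edges (join_path xs ys) = path_edges xs \<union> path_edges ys"
  by (simp add: path_edges_def zip_tl_join_path)

lemma path_weight_join_path:
  "xs \<noteq> [] \<Longrightarrow> last xs = hd ys \<Longrightarrow>
   path_weight w (join_path xs ys) = path_weight w xs + path_weight w ys"
  by (simp add: path_weight_def zip_tl_join_path)

lemma is_path_join_path:
  assumes "is_path E xs a b" "is_path E ys b c"
  shows "is_path E (join_path xs ys) a c"
proof -
  have "last (join_path xs ys) = c"
    using assms by (cases ys) (auto simp: is_path_def join_path_def)
  then show ?thesis using assms path_edges_join_path[of xs ys]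
    by (auto simp: is_path_iff_path_edges join_path_def)
qed

lemma join_path_take_drop: "i < length p \<Longrightarrow> join_path (take (Suc i) p) (drop i p) = p"
  unfolding join_path_def by (metis Cons_nth_drop_Suc append_take_drop_id list.sel(3))

lemma join_path_take_subpath:
  "i \<le> j \<Longrightarrow> j < length p \<Longrightarrow> join_path (take (Suc i) p) (subpath p i j) = take (Suc j) p"
  using join_path_take_drop[of i "take (Suc j) p"] by (simp add: subpath_def min_absorb1)

lemma is_path_take: "is_path E p a b \<Longrightarrow> i < length p \<Longrightarrow> is_path E (take (Suc i) p) a (p ! i)"
  unfolding is_path_def
  by (auto simp: hd_conv_nth last_conv_nth min_def intro: arg_cong[where f = "(!) p"])

lemma is_path_drop: "is_path E p a b \<Longrightarrow> i < length p \<Longrightarrow> is_path E (drop i p) (p ! i) b"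
  unfolding is_path_def by (auto simp: hd_drop_conv_nth)

lemma is_path_subpath:
  "is_path E p a b \<Longrightarrow> i \<le> j \<Longrightarrow> j < length p \<Longrightarrow> is_path E (subpath p i j) (p ! i) (p ! j)"
  using is_path_drop[OF is_path_take, of E p a b j i] by (simp add: subpath_def)

lemma path_weight_split_subpath:
  assumes "is_path E p a b" "i \<le> j" "j < length p"
  shows "path_weight w p =
    path_weight w (take (Suc i) p) + path_weight w (subpath p i j) + path_weight w (drop j p)"
proof -
  have "p \<noteq> []" using assms(3) by auto
  then have "path_weight w p = path_weight w (take (Suc j) p) + path_weight w (drop j p)"
    using assms join_path_take_drop[of j p] path_weight_join_path[of "take (Suc j) p" "drop j p"]
    by (auto simp: last_conv_nth hd_drop_conv_nth)
  also have "path_weight w (take (Suc j) p) =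
      path_weight w (take (Suc i) p) + path_weight w (subpath p i j)"
    using assms join_path_take_subpath[of i j p] is_path_subpath[OF assms]
      path_weight_join_path[of "take (Suc i) p" "subpath p i j"]
    by (simp add: last_conv_nth is_path_def)
  finally show ?thesis .
qed

lemma path_edges_subpath_subset:
  assumes "i \<le> j" "j < length p"
  shows "path_edges (subpath p i j) \<subseteq> path_edges p"
proof -
  have "p \<noteq> []" using assms(2) by auto
  then have "path_edges (take (Suc j) p) \<subseteq> path_edges p"
    using assms join_path_take_drop[of j p] path_edges_join_path[of "take (Suc j) p" "drop j p"]
    by (auto simp: last_conv_nth hd_drop_conv_nth)
  moreover have "path_edges (subpath p i j) \<subseteq> path_edges (take (Suc j) p)"
    using \<open>p \<noteq> []\<close> assms join_path_take_subpath[of i j p]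
      path_edges_join_path[of "take (Suc i) p" "subpath p i j"]
    by (simp add: last_conv_nth subpath_def hd_drop_conv_nth)
  ultimately show ?thesis by blast
qed

lemma path_edges_subset_sp_edges: "p \<in> shortest_paths E w s t \<Longrightarrow> path_edges p \<subseteq> sp_edges E w s t"
  unfolding sp_edges_def by blast

lemma shortest_path_splice:
  assumes p: "p \<in> shortest_paths E w s t" and ij: "i \<le> j" "j < length p"
    and q: "is_path E q (p ! i) (p ! j)"
  shows "path_weight w (subpath p i j) \<le> path_weight w q"
    and "path_weight w q \<le> path_weight w (subpath p i j) \<Longrightarrow> path_edges q \<subseteq> sp_edges E w s t"
proof -
  have path_p: "is_path E p s t"
    and min_p: "\<And>r. is_path E r s t \<Longrightarrow> path_weight w p \<le> path_weight w r"
    using p by (auto simp: shortest_paths_def)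
  have pre: "is_path E (take (Suc i) p) s (p ! i)" and suf: "is_path E (drop j p) (p ! j) t"
    using is_path_take[OF path_p] is_path_drop[OF path_p] ij by auto
  have pre_q: "is_path E (join_path (take (Suc i) p) q) s (p ! j)"
    by (rule is_path_join_path[OF pre q])
  define r where "r = join_path (join_path (take (Suc i) p) q) (drop j p)"
  have path_r: "is_path E r s t"
    unfolding r_def by (rule is_path_join_path[OF pre_q suf])
  have joinable: "xs \<noteq> []" "last xs = hd ys" if "is_path E xs a b" "is_path E ys b c" for xs ys a b c
    using that by (simp_all add: is_path_def)
  have weight_r: "path_weight w r =
      path_weight w (take (Suc i) p) + path_weight w q + path_weight w (drop j p)"
    unfolding r_def
    using path_weight_join_path[OF joinable[OF pre_q suf]] path_weight_join_path[OF joinable[OF pre q]]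
    by simp
  have edges_r: "path_edges q \<subseteq> path_edges r"
    unfolding r_def
    using path_edges_join_path[OF joinable[OF pre_q suf]] path_edges_join_path[OF joinable[OF pre q]]
   by auto
  have weight_p: "path_weight w p =
      path_weight w (take (Suc i) p) + path_weight w (subpath p i j) + path_weight w (drop j p)"
    by (rule path_weight_split_subpath[OF path_p ij])
  show "path_weight w (subpath p i j) \<le> path_weight w q"
    using min_p[OF path_r] weight_r weight_p by simp
  assume "path_weight w q \<le> path_weight w (subpath p i j)"
  then have "r \<in> shortest_paths E w s t"
    using path_r min_p weight_r weight_p by (fastforce simp: shortest_paths_def)
  then show "path_edges q \<subseteq> sp_edges E w s t"
    using edges_r by (blast dest: path_edges_subset_sp_edges)
qed

lemma acyclic_common_vertices_same_order:
  assumes "acyclic E" "is_path E p a b" "is_path E q c d"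
    and "i \<le> j" "j < length p" "k < length q" "l < length q"
    and "p ! i = q ! k" "p ! j = q ! l"
  shows "k \<le> l"
proof (rule ccontr)
  assume "\<not> k \<le> l"
  then have "(q ! l, q ! k) \<in> E\<^sup>+" using is_path_nth_trancl[OF assms(3)] assms(6) by simp
  moreover have "(q ! k, q ! l) \<in> E\<^sup>*" using is_path_nth_rtrancl[OF assms(2,4,5)] assms(8,9) by simp
  ultimately have "(q ! l, q ! l) \<in> E\<^sup>+" by simp
  then show False using assms(1) by (simp add: acyclic_def)
qed

lemma common_vertices_sp_edges_rtrancl:
  assumes "acyclic E" and P1: "P1 \<in> shortest_paths E w s1 t1" and P2: "P2 \<in> shortest_paths E w s2 t2"
    and ij: "i \<le> j" "j < length P1" and "k < length P2" "l < length P2"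
    and x: "P1 ! i = P2 ! k" and y: "P1 ! j = P2 ! l"
  shows "(P1 ! i, P1 ! j) \<in> (sp_edges E w s1 t1 \<inter> sp_edges E w s2 t2)\<^sup>*"
proof -
  have path1: "is_path E P1 s1 t1" and path2: "is_path E P2 s2 t2"
    using P1 P2 by (auto simp: shortest_paths_def)
  have kl: "k \<le> l"
    using acyclic_common_vertices_same_order[OF assms(1) path1 path2 ij assms(6,7) x y] .
  let ?q = "subpath P2 k l"
  have q: "is_path E ?q (P1 ! i) (P1 ! j)"
    using is_path_subpath[OF path2 kl assms(7)] x y by simp
  have "path_weight w (subpath P1 i j) \<le> path_weight w ?q"
    by (rule shortest_path_splice(1)[OF P1 ij q])
  moreover have "path_weight w ?q \<le> path_weight w (subpath P1 i j)"
    using shortest_path_splice(1)[OF P2 kl assms(7)] is_path_subpath[OF path1 ij] x y by simp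
  ultimately have "path_edges ?q \<subseteq> sp_edges E w s1 t1"
    using shortest_path_splice(2)[OF P1 ij q] by simp
  moreover have "path_edges ?q \<subseteq> sp_edges E w s2 t2"
    using path_edges_subpath_subset[OF kl assms(7)] path_edges_subset_sp_edges[OF P2] by blast
  ultimately show ?thesis
    using is_path_rtrancl[OF is_path_mono[OF q]] by blast
qed

lemma common_vertices_comparable:
  assumes "acyclic E" "P1 \<in> shortest_paths E w s1 t1" "P2 \<in> shortest_paths E w s2 t2"
    and "x \<in> set P1 \<inter> set P2" "y \<in> set P1 \<inter> set P2"
  defines "F \<equiv> sp_edges E w s1 t1 \<inter> sp_edges E w s2 t2"
  shows "(x, y) \<in> F\<^sup>* \<or> (y, x) \<in> F\<^sup>*"
proof -
  obtain i k where i: "i < length P1" "P1 ! i = x" and k: "k < length P2" "P2 ! k = x"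
    using assms(4) by (auto simp: in_set_conv_nth)
  obtain j l where j: "j < length P1" "P1 ! j = y" and l: "l < length P2" "P2 ! l = y"
    using assms(5) by (auto simp: in_set_conv_nth)
  show ?thesis
  proof (cases "i \<le> j")
    case True
    then show ?thesis
      using common_vertices_sp_edges_rtrancl[OF assms(1-3) True j(1) k(1) l(1)] i j k l
      unfolding F_def by simp
  next
    case False
    then show ?thesis
      using common_vertices_sp_edges_rtrancl[OF assms(1-3), of j i l k] i j k l
      unfolding F_def by simp
  qed
qed

lemma subset_undirected_component:
  assumes "S \<subseteq> V" "x \<in> S" "\<And>y z. y \<in> S \<Longrightarrow> z \<in> S \<Longrightarrow> (y, z) \<in> F\<^sup>* \<or> (z, y) \<in> F\<^sup>*"
  shows "\<exists>B \<in> undirected_components V F. S \<subseteq> B"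
proof -
  let ?R = "(F \<union> F\<inverse>)\<^sup>* \<inter> V \<times> V"
  have "(x, y) \<in> ?R" if "y \<in> S" for y
  proof -
    have "F\<^sup>* \<subseteq> (F \<union> F\<inverse>)\<^sup>*" "(F\<^sup>*)\<inverse> \<subseteq> (F \<union> F\<inverse>)\<^sup>*"
      by (simp_all add: rtrancl_mono flip: rtrancl_converse)
    then show ?thesis using assms(1,2) assms(3)[OF assms(2) that] that by blast
  qed
  then have "S \<subseteq> ?R `` {x}" by blast
  moreover have "?R `` {x} \<in> undirected_components V F"
    unfolding undirected_components_def using assms(1,2) by (intro quotientI) blast
  ultimately show ?thesis by blast
qed

theorem lemma18:
  fixes V :: "'a set" and E :: "('a \<times> 'a) set" and w :: "'a \<times> 'a \<Rightarrow> real"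
    and s1 t1 s2 t2 :: 'a and P1 P2 :: "'a list"
  assumes "dag V E"
    and "s1 \<in> V" "t1 \<in> V" "s2 \<in> V" "t2 \<in> V"
    and "P1 \<in> shortest_paths E w s1 t1"
    and "P2 \<in> shortest_paths E w s2 t2"
    and "set P1 \<inter> set P2 \<noteq> {}"
  shows "\<exists>B \<in> undirected_components V (sp_edges E w s1 t1 \<inter> sp_edges E w s2 t2).
           set P1 \<inter> set P2 \<subseteq> B"
proof -
  have "acyclic E" and EV: "E \<subseteq> V \<times> V" using assms(1) by (simp_all add: dag_def acyclic_def)
  have "is_path E P1 s1 t1" using assms(6) by (simp add: shortest_paths_def)
  then have "set P1 \<inter> set P2 \<subseteq> V" using set_path_subset[OF EV assms(2)] by auto
  moreover obtain x where "x \<in> set P1 \<inter> set P2" using assms(8) by blast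
  ultimately show ?thesis
    by (rule subset_undirected_component[OF _ _ common_vertices_comparable[OF \<open>acyclic E\<close> assms(6,7)]])
qed

end
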